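(* Let $m\ge4$, let $\mathcal W_1$ be an $m\times m$ quadrilateral labyrinth set in $Q$, and let $L_\infty$ be the associated quadrilateral labyrinth fractal. Then the interior of $L_\infty$ in $\mathbb{R}^2$ is empty.
   Context: Let $Q$ be a convex quadrilateral in $\mathbb{R}^2$. Divide $Q$ into two triangles by its shorter diagonal (either diagonal if they have equal length). Label the vertices $Q_1,Q_2,Q_3,Q_4$ anticlockwise, starting at an endpoint of that diagonal, so that the diagonal is $Q_1Q_3$. Let $\Delta_1$ be the closed triangle $Q_1Q_2Q_3$ and $\Delta_2$ the closed triangle $Q_3Q_4Q_1$. Every $x\in Q$ has a unique representation $x=\sum_{i=1}^4\alpha_iQ_i$, defined as follows. If $x\in\Delta_1$, then $\alpha_4=0$ and $(\alpha_1,\alpha_2,\alpha_3)$ are the barycentric coordinates of $x$ in $\Delta_1$. If $x\in\Delta_2$, then $\alpha_2=0$ and $(\alpha_1,\alpha_3,\alpha_4)$ are the barycentric coordinates of $x$ in $\Delta_2$. For an ordered quadruple $V=(V_1,\dots,V_4)$ define $P_V:Q\to\mathbb{R}^2$ by $P_V(x)=\sum_i\alpha_iV_i$. For an integer $m\ge2$, define the following index sets: - $A_1=\{(k_1,k_2,k_3,0)\in\mathbb{Z}_{\ge0}^4:k_1+k_2+k_3=m-1,\ k_2\ne0\}$, - $A_2=\{(k_1,0,k_3,k_4)\in\mathbb{Z}_{\ge0}^4:k_1+k_3+k_4=m-1,\ k_4\ne0\}$, - $A_3=\{(k_1,0,k_3,0)\in\mathbb{Z}_{\ge0}^4:k_1+k_3=m-1\}$,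 - $A=A_1\cup A_2\cup A_3$. For $k\in A$, let $S_m(k)$ be the quadrilateral with ordered vertices $R_1R_2R_3R_4$ given below. - If $k\in A_1$: $R_1=\frac{(k_1+1)Q_1+k_2Q_2+k_3Q_3}{m}$, $R_2=\frac{k_1Q_1+(k_2+1)Q_2+k_3Q_3}{m}$, $R_3=\frac{k_1Q_1+k_2Q_2+(k_3+1)Q_3}{m}$, $R_4=\frac{(k_1+1)Q_1+(k_2-1)Q_2+(k_3+1)Q_3}{m}$. - If $k\in A_2$: $R_1=\frac{(k_1+1)Q_1+k_3Q_3+k_4Q_4}{m}$, $R_2=\frac{(k_1+1)Q_1+(k_3+1)Q_3+(k_4-1)Q_4}{m}$, $R_3=\frac{k_1Q_1+(k_3+1)Q_3+k_4Q_4}{m}$, $R_4=\frac{k_1Q_1+k_3Q_3+(k_4+1)Q_4}{m}$. - If $k\in A_3$: $R_1=\frac{(k_1+1)Q_1+k_3Q_3}{m}$, $R_2=\frac{k_1Q_1+Q_2+k_3Q_3}{m}$, $R_3=\frac{k_1Q_1+(k_3+1)Q_3}{m}$, $R_4=\frac{k_1Q_1+k_3Q_3+Q_4}{m}$. Let $\mathcal S_m=\{S_m(k):k\in A\}$. For $\mathcal W\subseteq\mathcal S_m$, the graph $\mathcal G(\mathcal W)$ has vertex set $\mathcal W$, with two elements adjacent iff they have a common side. An $m\times m$ quadrilateral labyrinth set ($m\ge4$) is a set $\mathcal W_1\subseteq\mathcal S_m$ satisfying three properties. (1) Tree property: $\mathcal G(\mathcal W_1)$ is a tree. (2) Exit property: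 there is exactly one $(k_1,k_2,0,0)\in A$ with $S_m(k_1,k_2,0,0)\in\mathcal W_1$ and $S_m(0,0,k_2,k_1)\in\mathcal W_1$. There is also exactly one $(k_1,0,0,k_4)\in A$ with $S_m(k_1,0,0,k_4)\in\mathcal W_1$ and $S_m(0,k_1,k_4,0)\in\mathcal W_1$. (3) Corner property: $\mathcal W_1$ contains at most one element of $\{S_m(m-1,0,0,0),S_m(0,0,m-1,0)\}$ and at most one element of $\{S_m(0,m-1,0,0),S_m(0,0,0,m-1)\}$. Define recursively for $n\ge2$: $\mathcal W_n=\{P_{W}(W'):W'\in\mathcal W_1,\ W\in\mathcal W_{n-1}\}$. Here $P_W(W')$ is the quadrilateral whose ordered vertices are the images under $P_W$ of the ordered vertices of $W'$. Let $L_n=\bigcup_{W\in\mathcal W_n}W$ (closed regions) and $L_\infty=\bigcap_{n\ge1}L_n$. *)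

theory Defs
  imports "HOL-Analysis.Analysis"
begin

type_synonym pt = "real \<times> real"
type_synonym quad = "pt \<times> pt \<times> pt \<times> pt"
type_synonym idx = "nat \<times> nat \<times> nat \<times> nat"

definition orient :: "pt \<Rightarrow> pt \<Rightarrow> pt \<Rightarrow> real" where
  "orient a b c = (fst b - fst a) * (snd c - snd a) - (snd b - snd a) * (fst c - fst a)"

definition labelled_convex_quad :: "quad \<Rightarrow> bool" where
  "labelled_convex_quad Q = (case Q of (q1,q2,q3,q4) \<Rightarrow>
     orient q1 q2 q3 > 0 \<and> orient q2 q3 q4 > 0 \<and> orient q3 q4 q1 > 0 \<and> orient q4 q1 q2 > 0
     \<and> dist q1 q3 \<le> dist q2 q4)"

text \<open>The closed region of a quadrilateral (all quadrilaterals involved are convex).\<close>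
definition region :: "quad \<Rightarrow> pt set" where
  "region W = (case W of (v1,v2,v3,v4) \<Rightarrow> convex hull {v1,v2,v3,v4})"

definition sides :: "quad \<Rightarrow> pt set set" where
  "sides W = (case W of (v1,v2,v3,v4) \<Rightarrow>
     {closed_segment v1 v2, closed_segment v2 v3, closed_segment v3 v4, closed_segment v4 v1})"

definition qcoords :: "quad \<Rightarrow> pt \<Rightarrow> real \<times> real \<times> real \<times> real" where
  "qcoords Q x = (case Q of (q1,q2,q3,q4) \<Rightarrow>
     if x \<in> convex hull {q1,q2,q3} then
       (THE a. case a of (a1,a2,a3,a4) \<Rightarrow> a4 = 0 \<and> a1 \<ge> 0 \<and> a2 \<ge> 0 \<and> a3 \<ge> 0
          \<and> a1 + a2 + a3 = 1 \<and> x = a1 *\<^sub>R q1 + a2 *\<^sub>R q2 + a3 *\<^sub>R q3)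
     else
       (THE a. case a of (a1,a2,a3,a4) \<Rightarrow> a2 = 0 \<and> a1 \<ge> 0 \<and> a3 \<ge> 0 \<and> a4 \<ge> 0
          \<and> a1 + a3 + a4 = 1 \<and> x = a1 *\<^sub>R q1 + a3 *\<^sub>R q3 + a4 *\<^sub>R q4))"

definition PV :: "quad \<Rightarrow> quad \<Rightarrow> pt \<Rightarrow> pt" where
  "PV Q V x = (case qcoords Q x of (a1,a2,a3,a4) \<Rightarrow> case V of (v1,v2,v3,v4) \<Rightarrow>
     a1 *\<^sub>R v1 + a2 *\<^sub>R v2 + a3 *\<^sub>R v3 + a4 *\<^sub>R v4)"

definition qmap :: "(pt \<Rightarrow> pt) \<Rightarrow> quad \<Rightarrow> quad" where
  "qmap f W = (case W of (a,b,c,d) \<Rightarrow> (f a, f b, f c, f d))"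

definition PW :: "quad \<Rightarrow> quad \<Rightarrow> quad \<Rightarrow> quad" where
  "PW Q W W' = qmap (PV Q W) W'"

definition idxA :: "nat \<Rightarrow> idx set" where
  "idxA m = {(k1,k2,k3,k4).
      (k4 = 0 \<and> k1 + k2 + k3 = m - 1 \<and> k2 \<noteq> 0)
    \<or> (k2 = 0 \<and> k1 + k3 + k4 = m - 1 \<and> k4 \<noteq> 0)
    \<or> (k2 = 0 \<and> k4 = 0 \<and> k1 + k3 = m - 1)}"

definition lc :: "nat \<Rightarrow> quad \<Rightarrow> real \<Rightarrow> real \<Rightarrow> real \<Rightarrow> real \<Rightarrow> pt" where
  "lc m Q a b c d = (case Q of (q1,q2,q3,q4) \<Rightarrow>
     (1 / real m) *\<^sub>R (a *\<^sub>R q1 + b *\<^sub>R q2 + c *\<^sub>R q3 + d *\<^sub>R q4))"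

definition Sm :: "quad \<Rightarrow> nat \<Rightarrow> idx \<Rightarrow> quad" where
  "Sm Q m k = (case k of (n1,n2,n3,n4) \<Rightarrow>
     let k1 = real n1; k2 = real n2; k3 = real n3; k4 = real n4 in
     if n4 = 0 \<and> n2 \<noteq> 0 then
       (lc m Q (k1+1) k2 k3 0, lc m Q k1 (k2+1) k3 0, lc m Q k1 k2 (k3+1) 0,
        lc m Q (k1+1) (k2-1) (k3+1) 0)
     else if n2 = 0 \<and> n4 \<noteq> 0 then
       (lc m Q (k1+1) 0 k3 k4, lc m Q (k1+1) 0 (k3+1) (k4-1), lc m Q k1 0 (k3+1) k4,
        lc m Q k1 0 k3 (k4+1))
     else
       (lc m Q (k1+1) 0 k3 0, lc m Q k1 1 k3 0, lc m Q k1 0 (k3+1) 0, lc m Q k1 0 k3 1))"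

definition Sset :: "quad \<Rightarrow> nat \<Rightarrow> quad set" where
  "Sset Q m = Sm Q m ` idxA m"

definition adjacent :: "quad \<Rightarrow> quad \<Rightarrow> bool" where
  "adjacent W W' \<longleftrightarrow> W \<noteq> W' \<and> sides W \<inter> sides W' \<noteq> {}"

definition is_walk :: "('a \<Rightarrow> 'a \<Rightarrow> bool) \<Rightarrow> 'a set \<Rightarrow> 'a list \<Rightarrow> bool" where
  "is_walk E V xs \<longleftrightarrow> xs \<noteq> [] \<and> set xs \<subseteq> V \<and>
     (\<forall>i. Suc i < length xs \<longrightarrow> E (xs ! i) (xs ! Suc i))"

definition graph_connected :: "'a set \<Rightarrow> ('a \<Rightarrow> 'a \<Rightarrow> bool) \<Rightarrow> bool" where
  "graph_connected V E \<longleftrightarrow>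
     (\<forall>u\<in>V. \<forall>v\<in>V. \<exists>xs. is_walk E V xs \<and> hd xs = u \<and> last xs = v)"

definition graph_has_cycle :: "'a set \<Rightarrow> ('a \<Rightarrow> 'a \<Rightarrow> bool) \<Rightarrow> bool" where
  "graph_has_cycle V E \<longleftrightarrow>
     (\<exists>xs. is_walk E V xs \<and> length xs \<ge> 3 \<and> distinct xs \<and> E (last xs) (hd xs))"

definition graph_is_tree :: "'a set \<Rightarrow> ('a \<Rightarrow> 'a \<Rightarrow> bool) \<Rightarrow> bool" where
  "graph_is_tree V E \<longleftrightarrow> V \<noteq> {} \<and> graph_connected V E \<and> \<not> graph_has_cycle V E"

definition labyrinth_set :: "quad \<Rightarrow> nat \<Rightarrow> quad set \<Rightarrow> bool" where
  "labyrinth_set Q m W1 \<longleftrightarrow> m \<ge> 4 \<and> W1 \<subseteq> Sset Q m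
   \<and> graph_is_tree W1 adjacent
   \<and> (\<exists>!p. case p of (k1,k2) \<Rightarrow> (k1,k2,0,0) \<in> idxA m
          \<and> Sm Q m (k1,k2,0,0) \<in> W1 \<and> Sm Q m (0,0,k2,k1) \<in> W1)
   \<and> (\<exists>!p. case p of (k1,k4) \<Rightarrow> (k1,0,0,k4) \<in> idxA m
          \<and> Sm Q m (k1,0,0,k4) \<in> W1 \<and> Sm Q m (0,k1,k4,0) \<in> W1)
   \<and> \<not> (Sm Q m (m-1,0,0,0) \<in> W1 \<and> Sm Q m (0,0,m-1,0) \<in> W1)
   \<and> \<not> (Sm Q m (0,m-1,0,0) \<in> W1 \<and> Sm Q m (0,0,0,m-1) \<in> W1)"

fun Wlev :: "quad \<Rightarrow> quad set \<Rightarrow> nat \<Rightarrow> quad set" where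
  "Wlev Q W1 0 = {}"
| "Wlev Q W1 (Suc 0) = W1"
| "Wlev Q W1 (Suc (Suc n)) = {PW Q W W' | W W'. W' \<in> W1 \<and> W \<in> Wlev Q W1 (Suc n)}"

definition Llev :: "quad \<Rightarrow> quad set \<Rightarrow> nat \<Rightarrow> pt set" where
  "Llev Q W1 n = (\<Union>W\<in>Wlev Q W1 n. region W)"

definition Linf :: "quad \<Rightarrow> quad set \<Rightarrow> pt set" where
  "Linf Q W1 = (\<Inter>n\<in>{1..}. Llev Q W1 n)"

end

theory Submission
  imports Defs
begin

text \<open>Measure a quadrilateral W by dbl_area W, twice its area. The m^2 cells into which Sm cuts W
  have total dbl_area equal to that of W, and if both halves of W along its first diagonal carry
  a fraction \<mu> of dbl_area W, then so do those of every cell, and every cell carries at least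
  the fraction 2 \<mu> / m^2 of dbl_area W. Since the adjacency graph of W1 is a tree, W1 omits at least
  one cell, so the cells of the n-th generation have total area at most (1 - 2 \<mu> / m^2)^n times
  that of Q. Hence the limit set is a Lebesgue null set and cannot contain an open ball.\<close>

section \<open>Lebesgue measure of triangles and convex quadrilaterals\<close>

text \<open>The library computes the area of triangles in real^2 (content_triangle); these maps carry it
  over to the plane real \<times> real of the definitions.\<close>
definition pair_of_vec :: "real^2 \<Rightarrow> real \<times> real" where
  "pair_of_vec v = (v$1, v$2)"

definition vec_of_pair :: "real \<times> real \<Rightarrow> real^2" where
  "vec_of_pair p = vector [fst p, snd p]"

lemma pair_of_vec_of_pair [simp]: "pair_of_vec (vec_of_pair p) = p"
  by (simp add: pair_of_vec_def vec_of_pair_def)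

lemma vec_of_pair_of_vec [simp]: "vec_of_pair (pair_of_vec v) = v"
  by (simp add: pair_of_vec_def vec_of_pair_def vec_eq_iff forall_2)

lemma linear_vec_of_pair: "linear vec_of_pair"
  by (rule linearI) (auto simp: vec_of_pair_def vec_eq_iff forall_2)

lemma pair_of_vec_measurable: "pair_of_vec \<in> borel_measurable borel"
proof -
  have "linear pair_of_vec"
    by (rule linearI) (auto simp: pair_of_vec_def)
  then show ?thesis
    by (intro borel_measurable_continuous_onI linear_continuous_on linear_conv_bounded_linear[THEN iffD1])
qed

lemma mem_box_pair:
  "(x :: real \<times> real) \<in> box l u \<longleftrightarrow> fst l < fst x \<and> fst x < fst u \<and> snd l < snd x \<and> snd x < snd u"
  by (auto simp: box_def Basis_prod_def inner_prod_def)

lemma lborel_pair_eq_distr_vec: "(lborel :: (real \<times> real) measure) = distr lborel borel pair_of_vec"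
proof (rule lborel_eqI)
  fix l u :: "real \<times> real"
  assume le: "\<And>b. b \<in> Basis \<Longrightarrow> l \<bullet> b \<le> u \<bullet> b"
  have "fst l \<le> fst u" "snd l \<le> snd u"
    using le[of "(1,0)"] le[of "(0,1)"] by (auto simp: Basis_prod_def inner_prod_def)
  moreover have "pair_of_vec -` box l u = box (vec_of_pair l) (vec_of_pair u)"
    by (auto simp: pair_of_vec_def vec_of_pair_def mem_box_cart forall_2 mem_box_pair)
  moreover have basis: "(Basis :: (real^2) set) = {axis 1 1, axis 2 1}" "axis (1::2) (1::real) \<noteq> axis 2 1"
    by (auto simp: Basis_vec_def UNIV_2 axis_eq_axis)
  ultimately show "emeasure (distr lborel borel pair_of_vec) (box l u) = (\<Prod>b\<in>Basis. (u - l) \<bullet> b)"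
    by (simp add: emeasure_distr pair_of_vec_measurable emeasure_lborel_box_eq Basis_prod_def basis
        vec_of_pair_def inner_prod_def cart_eq_inner_axis[symmetric] ennreal_mult mult.commute)
qed simp

lemma measure_triangle:
  fixes a b c :: "real \<times> real"
  shows "measure lborel (convex hull {a,b,c}) = \<bar>orient a b c\<bar> / 2"
proof -
  let ?S = "convex hull {a,b,c}"
  have "?S \<in> sets borel"
    by (intro borel_closed compact_imp_closed finite_imp_compact_convex_hull) auto
  then have "measure lborel ?S = measure lborel (pair_of_vec -` ?S)"
    unfolding lborel_pair_eq_distr_vec by (simp add: measure_distr pair_of_vec_measurable)
  also have "pair_of_vec -` ?S = vec_of_pair ` ?S"
  proof (intro set_eqI iffI)
    fix x assume "x \<in> pair_of_vec -` ?S"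
    then show "x \<in> vec_of_pair ` ?S"
      by (metis image_eqI vec_of_pair_of_vec vimageE)
  qed auto
  also have "\<dots> = convex hull {vec_of_pair a, vec_of_pair b, vec_of_pair c}"
    by (simp add: convex_hull_linear_image linear_vec_of_pair)
  also have "measure lborel \<dots> = \<bar>orient a b c\<bar> / 2"
    by (simp add: content_triangle vec_of_pair_def orient_def abs_minus_commute algebra_simps)
  finally show ?thesis .
qed

lemma subset_of_card_le_3:
  assumes "finite S" "S \<subseteq> {a,b,c,d}" "card S \<le> 3"
  shows "S \<subseteq> {a,b,c} \<or> S \<subseteq> {b,c,d} \<or> S \<subseteq> {c,d,a} \<or> S \<subseteq> {d,a,b}"
proof (rule ccontr)
  assume contra: "\<not> ?thesis"
  then have "a \<in> S" "b \<in> S" "c \<in> S" "d \<in> S"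
    using assms(2) by auto
  then have "S = {a,b,c,d}"
    using assms(2) by auto
  with assms(3) have "a = b \<or> a = c \<or> a = d \<or> b = c \<or> b = d \<or> c = d"
    by (auto simp: card_insert_if split: if_splits)
  with contra \<open>S = {a,b,c,d}\<close> show False
    by auto
qed

lemma convex_hull_4_subset_triangles:
  fixes a b c d :: "real \<times> real"
  shows "convex hull {a,b,c,d} \<subseteq>
    convex hull {a,b,c} \<union> convex hull {b,c,d} \<union> convex hull {c,d,a} \<union> convex hull {d,a,b}"
proof
  fix x assume "x \<in> convex hull {a,b,c,d}"
  then obtain S where S: "finite S" "S \<subseteq> {a,b,c,d}" "card S \<le> 3" "x \<in> convex hull S"
    by (subst (asm) caratheodory) auto
  from subset_of_card_le_3[OF S(1-3)] S(4)
  show "x \<in> convex hull {a,b,c} \<union> convex hull {b,c,d} \<union> convex hull {c,d,a} \<union> convex hull {d,a,b}"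
    by (meson UnI1 UnI2 hull_mono subsetD)
qed

lemma measure_convex_hull_4_le:
  fixes a b c d :: "real \<times> real"
  shows "measure lborel (convex hull {a,b,c,d}) \<le>
    (\<bar>orient a b c\<bar> + \<bar>orient b c d\<bar> + \<bar>orient c d a\<bar> + \<bar>orient d a b\<bar>) / 2"
proof -
  have hull: "convex hull {x,y,z} \<in> fmeasurable lborel" for x y z :: "real \<times> real"
    by (intro fmeasurable_compact finite_imp_compact_convex_hull) auto
  then have sets: "convex hull {x,y,z} \<in> sets lborel" for x y z :: "real \<times> real"
    by (rule fmeasurableD)
  have "measure lborel (convex hull {a,b,c,d}) \<le> measure lborel
      (convex hull {a,b,c} \<union> convex hull {b,c,d} \<union> convex hull {c,d,a} \<union> convex hull {d,a,b})"
    by (intro measure_mono_fmeasurable convex_hull_4_subset_triangles fmeasurable.Un hull)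
      (auto intro: borel_closed compact_imp_closed finite_imp_compact_convex_hull)
  also have "\<dots> \<le> measure lborel (convex hull {a,b,c}) + measure lborel (convex hull {b,c,d})
      + measure lborel (convex hull {c,d,a}) + measure lborel (convex hull {d,a,b})"
    by (smt (verit) measure_Un_le sets.Un sets)
  finally show ?thesis
    by (simp add: measure_triangle)
qed

section \<open>Coordinates with respect to Q and the maps PV\<close>

lemma affine_coords_unique:
  fixes p q r :: "real \<times> real"
  assumes "orient p q r \<noteq> 0" "a1 + a2 + a3 = 1" "b1 + b2 + b3 = 1"
    and "a1 *\<^sub>R p + a2 *\<^sub>R q + a3 *\<^sub>R r = b1 *\<^sub>R p + b2 *\<^sub>R q + b3 *\<^sub>R r"
  shows "a1 = b1 \<and> a2 = b2 \<and> a3 = b3"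
proof -
  obtain p1 p2 q1 q2 r1 r2 where P: "p = (p1,p2)" "q = (q1,q2)" "r = (r1,r2)"
    by (metis prod.exhaust)
  define d2 d3 where "d2 = a2 - b2" and "d3 = a3 - b3"
  have a1: "a1 = 1 - a2 - a3" and b1: "b1 = 1 - b2 - b3"
    using assms(2,3) by simp_all
  have "a1 * p1 + a2 * q1 + a3 * r1 = b1 * p1 + b2 * q1 + b3 * r1"
    and "a1 * p2 + a2 * q2 + a3 * r2 = b1 * p2 + b2 * q2 + b3 * r2"
    using assms(4) by (simp_all add: P)
  then have e1: "d2 * (q1 - p1) + d3 * (r1 - p1) = 0"
    and e2: "d2 * (q2 - p2) + d3 * (r2 - p2) = 0"
    unfolding a1 b1 d2_def d3_def by (simp_all add: algebra_simps)
  \<comment> \<open>Cramer's rule for the 2x2 system with determinant orient p q r\<close>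
  have "d2 * orient p q r = (r2 - p2) * (d2 * (q1 - p1) + d3 * (r1 - p1))
          - (r1 - p1) * (d2 * (q2 - p2) + d3 * (r2 - p2))"
    and "d3 * orient p q r = (q1 - p1) * (d2 * (q2 - p2) + d3 * (r2 - p2))
          - (q2 - p2) * (d2 * (q1 - p1) + d3 * (r1 - p1))"
    by (simp_all add: orient_def P algebra_simps)
  then have "d2 * orient p q r = 0" "d3 * orient p q r = 0"
    by (simp_all only: e1 e2 mult_zero_right diff_self)
  then have "d2 = 0" "d3 = 0"
    using assms(1) by simp_all
  then show ?thesis
    using a1 b1 by (simp add: d2_def d3_def)
qed

lemma orient_diagonal_first_triangle:
  assumes "u + v + w = 1"
  shows "orient q1 q3 (u *\<^sub>R q1 + v *\<^sub>R q2 + w *\<^sub>R q3) = - v * orient q1 q2 q3"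
proof -
  have u: "u = 1 - v - w" using assms by simp
  show ?thesis unfolding u
    by (cases q1, cases q2, cases q3) (simp add: orient_def algebra_simps)
qed

lemma orient_diagonal_second_triangle:
  assumes "u + v + w = 1"
  shows "orient q1 q3 (u *\<^sub>R q1 + v *\<^sub>R q3 + w *\<^sub>R q4) = w * orient q3 q4 q1"
proof -
  have u: "u = 1 - v - w" using assms by simp
  show ?thesis unfolding u
    by (cases q1, cases q3, cases q4) (simp add: orient_def algebra_simps)
qed

lemma qcoords_first_triangle:
  assumes "orient q1 q2 q3 > 0" "a1 \<ge> 0" "a2 \<ge> 0" "a3 \<ge> 0" "a1 + a2 + a3 = 1"
  shows "qcoords (q1,q2,q3,q4) (a1 *\<^sub>R q1 + a2 *\<^sub>R q2 + a3 *\<^sub>R q3) = (a1, a2, a3, 0)"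
proof -
  let ?x = "a1 *\<^sub>R q1 + a2 *\<^sub>R q2 + a3 *\<^sub>R q3"
  have "?x \<in> convex hull {q1,q2,q3}"
    using assms by (auto simp: convex_hull_3)
  moreover have "(THE a. case a of (b1,b2,b3,b4) \<Rightarrow> b4 = 0 \<and> b1 \<ge> 0 \<and> b2 \<ge> 0 \<and> b3 \<ge> 0
      \<and> b1 + b2 + b3 = 1 \<and> ?x = b1 *\<^sub>R q1 + b2 *\<^sub>R q2 + b3 *\<^sub>R q3) = (a1, a2, a3, 0)"
  proof (rule the_equality)
    fix b assume b: "case b of (b1,b2,b3,b4) \<Rightarrow> b4 = 0 \<and> b1 \<ge> 0 \<and> b2 \<ge> 0 \<and> b3 \<ge> 0
      \<and> b1 + b2 + b3 = 1 \<and> ?x = b1 *\<^sub>R q1 + b2 *\<^sub>R q2 + b3 *\<^sub>R q3"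
    obtain b1 b2 b3 b4 where bb: "b = (b1,b2,b3,b4)"
      by (metis prod.exhaust)
    show "b = (a1, a2, a3, 0)"
      using b affine_coords_unique[of q1 q2 q3 a1 a2 a3 b1 b2 b3] assms(1,5) by (simp add: bb)
  qed (use assms in simp)
  ultimately show ?thesis
    by (simp add: qcoords_def)
qed

lemma qcoords_second_triangle:
  assumes "orient q1 q2 q3 > 0" "orient q3 q4 q1 > 0"
    and "a1 \<ge> 0" "a3 \<ge> 0" "a4 > 0" "a1 + a3 + a4 = 1"
  shows "qcoords (q1,q2,q3,q4) (a1 *\<^sub>R q1 + a3 *\<^sub>R q3 + a4 *\<^sub>R q4) = (a1, 0, a3, a4)"
proof -
  let ?x = "a1 *\<^sub>R q1 + a3 *\<^sub>R q3 + a4 *\<^sub>R q4"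
  have "?x \<notin> convex hull {q1,q2,q3}"
  proof
    assume "?x \<in> convex hull {q1,q2,q3}"
    then obtain u v w where uvw: "v \<ge> 0" "u + v + w = 1" "?x = u *\<^sub>R q1 + v *\<^sub>R q2 + w *\<^sub>R q3"
      by (auto simp: convex_hull_3)
    \<comment> \<open>the diagonal q1 q3 separates the two triangles\<close>
    have "orient q1 q3 ?x = a4 * orient q3 q4 q1"
      by (rule orient_diagonal_second_triangle[OF assms(6)])
    moreover have "orient q1 q3 ?x = - v * orient q1 q2 q3"
      unfolding uvw(3) by (rule orient_diagonal_first_triangle[OF uvw(2)])
    moreover have "a4 * orient q3 q4 q1 > 0" "v * orient q1 q2 q3 \<ge> 0"
      using assms uvw by simp_all
    ultimately show False by linarith
  qed
  moreover have "(THE a. case a of (b1,b2,b3,b4) \<Rightarrow> b2 = 0 \<and> b1 \<ge> 0 \<and> b3 \<ge> 0 \<and> b4 \<ge> 0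
      \<and> b1 + b3 + b4 = 1 \<and> ?x = b1 *\<^sub>R q1 + b3 *\<^sub>R q3 + b4 *\<^sub>R q4) = (a1, 0, a3, a4)"
  proof (rule the_equality)
    fix b assume b: "case b of (b1,b2,b3,b4) \<Rightarrow> b2 = 0 \<and> b1 \<ge> 0 \<and> b3 \<ge> 0 \<and> b4 \<ge> 0
      \<and> b1 + b3 + b4 = 1 \<and> ?x = b1 *\<^sub>R q1 + b3 *\<^sub>R q3 + b4 *\<^sub>R q4"
    obtain b1 b2 b3 b4 where bb: "b = (b1,b2,b3,b4)"
      by (metis prod.exhaust)
    have "orient q1 q3 q4 \<noteq> 0"
      using assms(2) by (simp add: orient_def algebra_simps)
    then show "b = (a1, 0, a3, a4)"
      using b affine_coords_unique[of q1 q3 q4 a1 a3 a4 b1 b3 b4] assms(6)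
      by (simp add: bb)
  qed (use assms in simp)
  ultimately show ?thesis
    by (simp add: qcoords_def)
qed

lemma lc_eq:
  "lc m (v1,v2,v3,v4) a b c d = (a/m) *\<^sub>R v1 + (b/m) *\<^sub>R v2 + (c/m) *\<^sub>R v3 + (d/m) *\<^sub>R v4"
  by (simp add: lc_def scaleR_add_right divide_inverse_commute)

text \<open>The side condition b = 0 \<or> d = 0 places the point in one of the two triangles of Q, on which
  PV is the affine map sending Q to W.\<close>
lemma PV_lc:
  assumes "orient q1 q2 q3 > 0" "orient q3 q4 q1 > 0" "m > 0"
    and "a \<ge> 0" "b \<ge> 0" "c \<ge> 0" "d \<ge> 0" "a + b + c + d = real m" "b = 0 \<or> d = 0"
  shows "PV (q1,q2,q3,q4) W (lc m (q1,q2,q3,q4) a b c d) = lc m W a b c d"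
proof -
  obtain w1 w2 w3 w4 where W: "W = (w1,w2,w3,w4)"
    by (metis prod.exhaust)
  have sum: "a/m + b/m + c/m + d/m = 1"
    using assms(3,8) by (simp add: field_simps)
  consider "d = 0" | "b = 0" "d > 0"
    using assms(7,9) by linarith
  then have "qcoords (q1,q2,q3,q4) (lc m (q1,q2,q3,q4) a b c d) = (a/m, b/m, c/m, d/m)"
  proof cases
    case 1
    then show ?thesis
      using qcoords_first_triangle[of q1 q2 q3 "a/m" "b/m" "c/m" q4] assms sum by (simp add: lc_eq)
  next
    case 2
    then show ?thesis
      using qcoords_second_triangle[of q1 q2 q3 q4 "a/m" "c/m" "d/m"] assms sum by (simp add: lc_eq)
  qed
  then show ?thesis
    by (simp add: PV_def W lc_eq)
qed

lemma PW_Sm: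
  assumes "orient q1 q2 q3 > 0" "orient q3 q4 q1 > 0" "m > 0" "k \<in> idxA m"
  shows "PW (q1,q2,q3,q4) W (Sm (q1,q2,q3,q4) m k) = Sm W m k"
proof -
  obtain n1 n2 n3 n4 where k: "k = (n1,n2,n3,n4)"
    by (metis prod.exhaust)
  have m1: "real (m - 1) = real m - 1"
    using assms(3) by (simp add: of_nat_diff)
  note PV = PV_lc[OF assms(1-3)]
  consider "n4 = 0" "n2 \<noteq> 0" "real n1 + real n2 + real n3 = real m - 1"
    | "n2 = 0" "n4 \<noteq> 0" "real n1 + real n3 + real n4 = real m - 1"
    | "n2 = 0" "n4 = 0" "real n1 + real n3 = real m - 1"
    using assms(4) m1 by (auto simp: idxA_def k simp flip: of_nat_add)
  then show ?thesis
  proof cases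
    case 1
    have "Sm V m k = (lc m V (real n1 + 1) n2 n3 0, lc m V n1 (real n2 + 1) n3 0, lc m V n1 n2 (real n3 + 1) 0,
        lc m V (real n1 + 1) (real n2 - 1) (real n3 + 1) 0)" for V
      using 1 by (simp add: Sm_def k Let_def)
    moreover have "real n2 \<ge> 1"
      using 1 by simp
    ultimately show ?thesis
      by (simp only: PW_def qmap_def prod.case prod.inject) (intro conjI PV; use 1 in simp)
  next
    case 2
    have "Sm V m k = (lc m V (real n1 + 1) 0 n3 n4, lc m V (real n1 + 1) 0 (real n3 + 1) (real n4 - 1),
        lc m V n1 0 (real n3 + 1) n4, lc m V n1 0 n3 (real n4 + 1))" for V
      using 2 by (simp add: Sm_def k Let_def)
    moreover have "real n4 \<ge> 1"
      using 2 by simp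
    ultimately show ?thesis
      by (simp only: PW_def qmap_def prod.case prod.inject) (intro conjI PV; use 2 in simp)
  next
    case 3
    have "Sm V m k = (lc m V (real n1 + 1) 0 n3 0, lc m V n1 1 n3 0, lc m V n1 0 (real n3 + 1) 0,
        lc m V n1 0 n3 1)" for V
      using 3 by (simp add: Sm_def k Let_def)
    then show ?thesis
      by (simp only: PW_def qmap_def prod.case prod.inject) (intro conjI PV; use 3 in simp)
  qed
qed

section \<open>Orientations and areas of the cells\<close>

definition orient_abc :: "quad \<Rightarrow> real" where
  "orient_abc W = (case W of (a,b,c,d) \<Rightarrow> orient a b c)"

definition orient_bcd :: "quad \<Rightarrow> real" where
  "orient_bcd W = (case W of (a,b,c,d) \<Rightarrow> orient b c d)"

definition orient_cda :: "quad \<Rightarrow> real" where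
  "orient_cda W = (case W of (a,b,c,d) \<Rightarrow> orient c d a)"

definition orient_dab :: "quad \<Rightarrow> real" where
  "orient_dab W = (case W of (a,b,c,d) \<Rightarrow> orient d a b)"

definition dbl_area :: "quad \<Rightarrow> real" where
  "dbl_area W = orient_abc W + orient_cda W"

lemma orient_scale_translate:
  "orient (s *\<^sub>R (P + x)) (s *\<^sub>R (P + y)) (s *\<^sub>R (P + z)) = s\<^sup>2 * orient x y z"
  by (cases P, cases x, cases y, cases z) (simp add: orient_def power2_eq_square algebra_simps)

lemma orient_two_diagonals: "orient a b c + orient c d a = orient b c d + orient d a b"
  by (cases a, cases b, cases c, cases d) (simp add: orient_def algebra_simps)

text \<open>A cell with n2 \<noteq> 0 (resp. n4 \<noteq> 0) is a translate of the parallelogram spanned by the edges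
  of W at its second (resp. fourth) vertex, scaled by 1/m; a cell with n2 = n4 = 0 is a translate
  of W scaled by 1/m.\<close>
lemma Sm_vertices:
  fixes m :: nat
  defines "s \<equiv> 1 / real m"
  shows "n2 \<noteq> 0 \<Longrightarrow> Sm (v1,v2,v3,v4) m (n1,n2,n3,0) =
     (let P = real n1 *\<^sub>R v1 + real n2 *\<^sub>R v2 + real n3 *\<^sub>R v3 in
       (s *\<^sub>R (P + v1), s *\<^sub>R (P + v2), s *\<^sub>R (P + v3), s *\<^sub>R (P + (v1 - v2 + v3))))"
    and "n4 \<noteq> 0 \<Longrightarrow> Sm (v1,v2,v3,v4) m (n1,0,n3,n4) =
     (let P = real n1 *\<^sub>R v1 + real n3 *\<^sub>R v3 + real n4 *\<^sub>R v4 in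
       (s *\<^sub>R (P + v1), s *\<^sub>R (P + (v1 + v3 - v4)), s *\<^sub>R (P + v3), s *\<^sub>R (P + v4)))"
    and "Sm (v1,v2,v3,v4) m (n1,0,n3,0) =
     (let P = real n1 *\<^sub>R v1 + real n3 *\<^sub>R v3 in
       (s *\<^sub>R (P + v1), s *\<^sub>R (P + v2), s *\<^sub>R (P + v3), s *\<^sub>R (P + v4)))"
  by (auto simp: Sm_def s_def Let_def lc_def algebra_simps)

lemma Sm_orients:
  fixes W :: quad and m :: nat
  defines "s \<equiv> 1 / real m ^ 2"
  shows "n2 \<noteq> 0 \<Longrightarrow>
      orient_abc (Sm W m (n1,n2,n3,0)) = s * orient_abc W \<and> orient_cda (Sm W m (n1,n2,n3,0)) = s * orient_abc W
    \<and> orient_bcd (Sm W m (n1,n2,n3,0)) = s * orient_abc W \<and> orient_dab (Sm W m (n1,n2,n3,0)) = s * orient_abc W"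
    and "n4 \<noteq> 0 \<Longrightarrow>
      orient_abc (Sm W m (n1,0,n3,n4)) = s * orient_cda W \<and> orient_cda (Sm W m (n1,0,n3,n4)) = s * orient_cda W
    \<and> orient_bcd (Sm W m (n1,0,n3,n4)) = s * orient_cda W \<and> orient_dab (Sm W m (n1,0,n3,n4)) = s * orient_cda W"
    and "orient_abc (Sm W m (n1,0,n3,0)) = s * orient_abc W \<and> orient_cda (Sm W m (n1,0,n3,0)) = s * orient_cda W
    \<and> orient_bcd (Sm W m (n1,0,n3,0)) = s * orient_bcd W \<and> orient_dab (Sm W m (n1,0,n3,0)) = s * orient_dab W"
proof -
  obtain v1 v2 v3 v4 where W: "W = (v1,v2,v3,v4)"
    by (metis prod.exhaust)
  have sq: "(1 / real m)\<^sup>2 = s"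
    by (simp add: s_def power_divide)
  have "orient v2 v3 (v1 - v2 + v3) = orient v1 v2 v3" "orient v3 (v1 - v2 + v3) v1 = orient v1 v2 v3"
    "orient (v1 - v2 + v3) v1 v2 = orient v1 v2 v3"
    "orient v1 (v1 + v3 - v4) v3 = orient v3 v4 v1" "orient (v1 + v3 - v4) v3 v4 = orient v3 v4 v1"
    "orient v4 v1 (v1 + v3 - v4) = orient v3 v4 v1"
    by (cases v1, cases v2, cases v3, cases v4, simp add: orient_def algebra_simps)+
  note parallelogram = this
  note simps = Sm_vertices Let_def orient_abc_def orient_bcd_def orient_cda_def orient_dab_def
    orient_scale_translate W parallelogram sq
  show "n2 \<noteq> 0 \<Longrightarrow>
      orient_abc (Sm W m (n1,n2,n3,0)) = s * orient_abc W \<and> orient_cda (Sm W m (n1,n2,n3,0)) = s * orient_abc W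
    \<and> orient_bcd (Sm W m (n1,n2,n3,0)) = s * orient_abc W \<and> orient_dab (Sm W m (n1,n2,n3,0)) = s * orient_abc W"
    by (simp add: simps)
  show "n4 \<noteq> 0 \<Longrightarrow>
      orient_abc (Sm W m (n1,0,n3,n4)) = s * orient_cda W \<and> orient_cda (Sm W m (n1,0,n3,n4)) = s * orient_cda W
    \<and> orient_bcd (Sm W m (n1,0,n3,n4)) = s * orient_cda W \<and> orient_dab (Sm W m (n1,0,n3,n4)) = s * orient_cda W"
    by (simp add: simps)
  show "orient_abc (Sm W m (n1,0,n3,0)) = s * orient_abc W \<and> orient_cda (Sm W m (n1,0,n3,0)) = s * orient_cda W
    \<and> orient_bcd (Sm W m (n1,0,n3,0)) = s * orient_bcd W \<and> orient_dab (Sm W m (n1,0,n3,0)) = s * orient_dab W"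
    by (simp add: simps)
qed

definition tri_pairs :: "nat \<Rightarrow> (nat \<times> nat) set" where
  "tri_pairs m = {(i,j). 1 \<le> i \<and> i + j < m}"

lemma finite_tri_pairs: "finite (tri_pairs m)"
  by (rule finite_subset[of _ "{..<m} \<times> {..<m}"]) (auto simp: tri_pairs_def)

lemma card_tri_pairs: "2 * card (tri_pairs m) + m = m * m"
proof (induction m)
  case 0
  then show ?case by (simp add: tri_pairs_def)
next
  case (Suc m)
  let ?new = "(\<lambda>i. (i, m - i)) ` {1..m}"
  have "tri_pairs (Suc m) = tri_pairs m \<union> ?new" "tri_pairs m \<inter> ?new = {}"
    by (auto simp: tri_pairs_def image_iff)
  moreover have "card ?new = m"
    by (subst card_image) (auto simp: inj_on_def)
  ultimately have "card (tri_pairs (Suc m)) = card (tri_pairs m) + m"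
    by (simp add: card_Un_disjoint finite_tri_pairs)
  with Suc show ?case by simp
qed

definition idx_tri1 :: "nat \<Rightarrow> nat \<times> nat \<Rightarrow> idx" where
  "idx_tri1 m p = (case p of (i,j) \<Rightarrow> (m - 1 - i - j, i, j, 0))"

definition idx_tri2 :: "nat \<Rightarrow> nat \<times> nat \<Rightarrow> idx" where
  "idx_tri2 m p = (case p of (i,j) \<Rightarrow> (m - 1 - i - j, 0, j, i))"

definition idx_diag :: "nat \<Rightarrow> nat \<Rightarrow> idx" where
  "idx_diag m j = (m - 1 - j, 0, j, 0)"

lemma idxA_eq_Un:
  assumes "m > 0"
  shows "idxA m = idx_tri1 m ` tri_pairs m \<union> idx_tri2 m ` tri_pairs m \<union> idx_diag m ` {..<m}"
proof (intro set_eqI iffI)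
  fix k assume "k \<in> idxA m"
  then obtain n1 n2 n3 n4 where k: "k = (n1,n2,n3,n4)"
    and "n4 = 0 \<and> n1 + n2 + n3 = m - 1 \<and> n2 \<noteq> 0 \<or> n2 = 0 \<and> n1 + n3 + n4 = m - 1 \<and> n4 \<noteq> 0
      \<or> n2 = 0 \<and> n4 = 0 \<and> n1 + n3 = m - 1"
    by (auto simp: idxA_def)
  then have "k = idx_tri1 m (n2,n3) \<and> (n2,n3) \<in> tri_pairs m
      \<or> k = idx_tri2 m (n4,n3) \<and> (n4,n3) \<in> tri_pairs m \<or> k = idx_diag m n3 \<and> n3 < m"
    using assms by (auto simp: idx_tri1_def idx_tri2_def idx_diag_def tri_pairs_def)
  then show "k \<in> idx_tri1 m ` tri_pairs m \<union> idx_tri2 m ` tri_pairs m \<union> idx_diag m ` {..<m}"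
    by blast
qed (use assms in \<open>auto simp: idxA_def idx_tri1_def idx_tri2_def idx_diag_def tri_pairs_def\<close>)

lemma finite_idxA: "m > 0 \<Longrightarrow> finite (idxA m)"
  by (simp add: idxA_eq_Un finite_tri_pairs)

lemma sum_idxA:
  assumes "m > 0"
  shows "(\<Sum>k\<in>idxA m. g k) = (\<Sum>p\<in>tri_pairs m. g (idx_tri1 m p)) + (\<Sum>p\<in>tri_pairs m. g (idx_tri2 m p))
    + (\<Sum>j<m. g (idx_diag m j))"
proof -
  have "inj_on (idx_tri1 m) (tri_pairs m)" "inj_on (idx_tri2 m) (tri_pairs m)" "inj_on (idx_diag m) {..<m}"
    by (auto simp: inj_on_def idx_tri1_def idx_tri2_def idx_diag_def tri_pairs_def)
  moreover have "idx_tri1 m ` tri_pairs m \<inter> idx_tri2 m ` tri_pairs m = {}"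
    "(idx_tri1 m ` tri_pairs m \<union> idx_tri2 m ` tri_pairs m) \<inter> idx_diag m ` {..<m} = {}"
    by (auto simp: idx_tri1_def idx_tri2_def idx_diag_def tri_pairs_def)
  ultimately show ?thesis
    unfolding idxA_eq_Un[OF assms] by (simp add: sum.union_disjoint finite_tri_pairs sum.reindex)
qed

lemma sum_dbl_area_Sm:
  assumes "m > 0"
  shows "(\<Sum>k\<in>idxA m. dbl_area (Sm W m k)) = dbl_area W"
proof -
  let ?s = "1 / real m ^ 2"
  have tri1: "dbl_area (Sm W m (idx_tri1 m p)) = 2 * ?s * orient_abc W" if "p \<in> tri_pairs m" for p
    using that by (auto simp: idx_tri1_def tri_pairs_def dbl_area_def Sm_orients)
  have tri2: "dbl_area (Sm W m (idx_tri2 m p)) = 2 * ?s * orient_cda W" if "p \<in> tri_pairs m" for p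
    using that by (auto simp: idx_tri2_def tri_pairs_def dbl_area_def Sm_orients)
  have diag: "dbl_area (Sm W m (idx_diag m j)) = ?s * dbl_area W" for j
    by (simp add: idx_diag_def dbl_area_def Sm_orients add_divide_distrib)
  have "(\<Sum>k\<in>idxA m. dbl_area (Sm W m k)) = real (card (tri_pairs m)) * (2 * ?s * orient_abc W)
      + real (card (tri_pairs m)) * (2 * ?s * orient_cda W) + real m * (?s * dbl_area W)"
    by (simp add: sum_idxA[OF assms] tri1 tri2 diag cong: sum.cong)
  also have "\<dots> = (2 * real (card (tri_pairs m)) + real m) * ?s * dbl_area W"
    by (simp add: dbl_area_def algebra_simps add_divide_distrib)
  also have "2 * real (card (tri_pairs m)) + real m = real m * real m"
    using card_tri_pairs[of m] by (metis of_nat_add of_nat_mult of_nat_numeral)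
  finally show ?thesis
    using assms by (simp add: power2_eq_square)
qed

lemma idxA_cases:
  assumes "k \<in> idxA m"
  obtains (tri1) n1 n2 n3 where "k = (n1,n2,n3,0)" "n2 \<noteq> 0"
    | (tri2) n1 n3 n4 where "k = (n1,0,n3,n4)" "n4 \<noteq> 0"
    | (diag) n1 n3 where "k = (n1,0,n3,0)"
  using assms by (auto simp: idxA_def)

text \<open>The lower bounds on the two halves of W make every cell of its subdivision carry at
  least the fraction 2 \<mu> / m^2 of the area of W; this property is inherited by the cells.\<close>
definition well_shaped :: "real \<Rightarrow> quad \<Rightarrow> bool" where
  "well_shaped \<mu> W \<longleftrightarrow> orient_abc W > 0 \<and> orient_bcd W > 0 \<and> orient_cda W > 0 \<and> orient_dab W > 0
     \<and> orient_abc W \<ge> \<mu> * dbl_area W \<and> orient_cda W \<ge> \<mu> * dbl_area W"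

lemma well_shaped_Sm:
  assumes "m > 0" "k \<in> idxA m" "well_shaped \<mu> W" "\<mu> \<le> 1/2"
  shows "well_shaped \<mu> (Sm W m k) \<and> dbl_area (Sm W m k) \<ge> 2 * \<mu> * dbl_area W / real m ^ 2"
proof -
  have "real m ^ 2 > 0"
    using assms(1) by simp
  note facts = this assms(3,4)
    mult_right_mono[of "\<mu> * orient_abc W + \<mu> * orient_cda W" "orient_abc W" "2 * real m ^ 2"]
    mult_right_mono[of "\<mu> * orient_abc W + \<mu> * orient_cda W" "orient_cda W" "2 * real m ^ 2"]
  from assms(2) show ?thesis
    by (cases rule: idxA_cases)
      (use facts in \<open>simp_all add: Sm_orients well_shaped_def dbl_area_def divide_simps algebra_simps\<close>)
qed

lemma measure_region_le:
  assumes "well_shaped \<mu> W"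
  shows "measure lborel (region W) \<le> dbl_area W"
proof -
  obtain v1 v2 v3 v4 where W: "W = (v1,v2,v3,v4)"
    by (metis prod.exhaust)
  have "measure lborel (region W) \<le>
      (\<bar>orient v1 v2 v3\<bar> + \<bar>orient v2 v3 v4\<bar> + \<bar>orient v3 v4 v1\<bar> + \<bar>orient v4 v1 v2\<bar>) / 2"
    unfolding W region_def using measure_convex_hull_4_le by simp
  also have "\<dots> = dbl_area W"
    using assms orient_two_diagonals[of v1 v2 v3 v4]
    by (simp add: well_shaped_def dbl_area_def orient_abc_def orient_bcd_def orient_cda_def orient_dab_def W)
  finally show ?thesis .
qed

section \<open>A labyrinth set omits a cell\<close>

lemma graph_has_cycle_4:
  assumes "E a b" "E b c" "E c d" "E d a" "distinct [a,b,c,d]" "{a,b,c,d} \<subseteq> V"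
  shows "graph_has_cycle V E"
  unfolding graph_has_cycle_def
proof (intro exI conjI)
  show "is_walk E V [a,b,c,d]"
    unfolding is_walk_def
  proof (intro conjI allI impI)
    fix i assume "Suc i < length [a,b,c,d]"
    then have "i = 0 \<or> i = 1 \<or> i = 2"
      by auto
    then show "E ([a,b,c,d] ! i) ([a,b,c,d] ! Suc i)"
      using assms(1-3) by auto
  qed (use assms(6) in auto)
qed (use assms(4,5) in auto)

lemma lc_inj_first_triangle:
  assumes "orient q1 q2 q3 \<noteq> 0" "m > 0" "a + b + c = real m" "a' + b' + c' = real m"
    and "lc m (q1,q2,q3,q4) a b c 0 = lc m (q1,q2,q3,q4) a' b' c' 0"
  shows "a = a' \<and> b = b' \<and> c = c'"
proof -
  have "a/m + b/m + c/m = 1" "a'/m + b'/m + c'/m = 1"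
    using assms(2-4) by (simp_all add: add_divide_distrib[symmetric])
  moreover have "(a/m) *\<^sub>R q1 + (b/m) *\<^sub>R q2 + (c/m) *\<^sub>R q3 = (a'/m) *\<^sub>R q1 + (b'/m) *\<^sub>R q2 + (c'/m) *\<^sub>R q3"
    using assms(5) by (simp add: lc_eq)
  ultimately have "a/m = a'/m \<and> b/m = b'/m \<and> c/m = c'/m"
    by (rule affine_coords_unique[OF assms(1)])
  then show ?thesis
    using assms(2) by simp
qed

text \<open>The four cells around the grid point (m-3) Q1 + 2 Q2 + Q3 of the triangle Q1 Q2 Q3, divided
  by m, form a cycle.\<close>
lemma graph_has_cycle_Sset:
  assumes "orient q1 q2 q3 \<noteq> 0" "m \<ge> 4"
  shows "graph_has_cycle (Sset (q1,q2,q3,q4) m) adjacent"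
proof -
  let ?Q = "(q1,q2,q3,q4)"
  obtain n where m: "m = n + 4"
    using assms(2) by (metis le_iff_add add.commute)
  let ?P = "\<lambda>a b c. lc m ?Q a b c 0"
  define C1 C2 C3 C4 where "C1 = Sm ?Q m (n + 1, 2, 0, 0)" and "C2 = Sm ?Q m (n, 3, 0, 0)"
    and "C3 = Sm ?Q m (n, 2, 1, 0)" and "C4 = Sm ?Q m (n + 1, 1, 1, 0)"
  have C: "C1 = (?P (real n + 2) 2 0, ?P (real n + 1) 3 0, ?P (real n + 1) 2 1, ?P (real n + 2) 1 1)"
    "C2 = (?P (real n + 1) 3 0, ?P (real n) 4 0, ?P (real n) 3 1, ?P (real n + 1) 2 1)"
    "C3 = (?P (real n + 1) 2 1, ?P (real n) 3 1, ?P (real n) 2 2, ?P (real n + 1) 1 2)"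
    "C4 = (?P (real n + 2) 1 1, ?P (real n + 1) 2 1, ?P (real n + 1) 1 2, ?P (real n + 2) 0 2)"
    by (simp_all add: C1_def C2_def C3_def C4_def Sm_def Let_def) (simp_all add: add.commute)
  have cells: "{C1, C2, C3, C4} \<subseteq> Sset ?Q m"
    unfolding C1_def C2_def C3_def C4_def Sset_def by (auto simp: idxA_def m)
  have distinct: "distinct [C1, C2, C3, C4]"
  proof -
    have neq: "?P a b c \<noteq> ?P a' b' c'"
      if "a + b + c = real n + 4" "a' + b' + c' = real n + 4" "\<not> (a = a' \<and> b = b' \<and> c = c')"
      for a b c a' b' c'
      using lc_inj_first_triangle[OF assms(1), of m a b c a' b' c' q4] that by (auto simp: m)
    have "fst C1 \<noteq> fst C2" "fst C1 \<noteq> fst C3" "fst C1 \<noteq> fst C4"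
      "fst C2 \<noteq> fst C3" "fst C2 \<noteq> fst C4" "fst C3 \<noteq> fst C4"
      unfolding C fst_conv by (rule neq; simp)+
    then show ?thesis
      by auto
  qed
  have "closed_segment (?P (real n + 1) 3 0) (?P (real n + 1) 2 1) \<in> sides C1 \<inter> sides C2"
    "closed_segment (?P (real n) 3 1) (?P (real n + 1) 2 1) \<in> sides C2 \<inter> sides C3"
    "closed_segment (?P (real n + 1) 1 2) (?P (real n + 1) 2 1) \<in> sides C3 \<inter> sides C4"
    "closed_segment (?P (real n + 2) 1 1) (?P (real n + 1) 2 1) \<in> sides C4 \<inter> sides C1"
    unfolding C sides_def by (simp_all add: closed_segment_commute)
  then have adj: "adjacent C1 C2" "adjacent C2 C3" "adjacent C3 C4" "adjacent C4 C1"
    using distinct unfolding adjacent_def by auto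
  from adj distinct cells show ?thesis
    by (rule graph_has_cycle_4)
qed

lemma labyrinth_set_misses_cell:
  assumes "labelled_convex_quad Q" "labyrinth_set Q m W1"
  shows "\<exists>k\<in>idxA m. Sm Q m k \<notin> W1"
proof (rule ccontr)
  assume "\<not> ?thesis"
  then have "Sset Q m \<subseteq> W1"
    by (auto simp: Sset_def)
  moreover have "W1 \<subseteq> Sset Q m" "m \<ge> 4" "\<not> graph_has_cycle W1 adjacent"
    using assms(2) by (simp_all add: labyrinth_set_def graph_is_tree_def)
  moreover have "orient (fst Q) (fst (snd Q)) (fst (snd (snd Q))) \<noteq> 0"
    using assms(1) by (auto simp: labelled_convex_quad_def split: prod.splits)
  ultimately show False
    using graph_has_cycle_Sset[of "fst Q" "fst (snd Q)" "fst (snd (snd Q))" m "snd (snd (snd Q))"]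
    by simp
qed

section \<open>The generations of a proper cell pattern\<close>

lemma negligible_if_covered_by_shrinking_compacts:
  fixes S :: "'a::euclidean_space set"
  assumes "\<And>n. S \<subseteq> A n" "\<And>n. compact (A n)" "(\<lambda>n. measure lborel (A n)) \<longlonglongrightarrow> 0"
  shows "negligible S"
  unfolding negligible_outer_le
proof (intro allI impI)
  fix e :: real assume "e > 0"
  then have "\<exists>n. measure lborel (A n) < e"
    using eventually_happens[OF order_tendstoD(2)[OF assms(3) \<open>e > 0\<close>]] by simp
  then obtain n where "measure lborel (A n) \<le> e"
    by (meson less_imp_le)
  moreover have "A n \<in> lmeasurable" "measure lebesgue (A n) = measure lborel (A n)"
    using assms(2) by (simp_all add: lmeasurable_compact borel_compact)
  ultimately show "\<exists>T. S \<subseteq> T \<and> T \<in> lmeasurable \<and> measure lebesgue T \<le> e"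
    using assms(1) by metis
qed

lemma compact_region: "compact (region W)"
  by (simp add: region_def finite_imp_compact_convex_hull split: prod.splits)

lemma well_shaped_dbl_area_nonneg: "well_shaped \<mu> W \<Longrightarrow> 0 \<le> dbl_area W"
  by (simp add: well_shaped_def dbl_area_def)

locale proper_cell_pattern =
  fixes Q :: quad and m :: nat and K :: "idx set" and k0 :: idx
  assumes convex_Q: "labelled_convex_quad Q"
    and m_pos: "m > 0"
    and K_subset: "K \<subseteq> idxA m"
    and k0_missing: "k0 \<in> idxA m" "k0 \<notin> K"
begin

abbreviation pattern :: "quad set" where
  "pattern \<equiv> Sm Q m ` K"

definition shape_bound :: real where
  "shape_bound = min (orient_abc Q) (orient_cda Q) / dbl_area Q"

definition area_ratio :: real where
  "area_ratio = 1 - 2 * shape_bound / real m ^ 2"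

lemma finite_K: "finite K"
  using finite_idxA[OF m_pos] K_subset by (rule finite_subset[rotated])

lemma PW_Q_Sm: "k \<in> idxA m \<Longrightarrow> PW Q W (Sm Q m k) = Sm W m k"
  using convex_Q PW_Sm[OF _ _ m_pos] unfolding labelled_convex_quad_def by (auto split: prod.splits)

lemma orients_Q_pos: "orient_abc Q > 0" "orient_bcd Q > 0" "orient_cda Q > 0" "orient_dab Q > 0"
  using convex_Q
  by (auto simp: labelled_convex_quad_def orient_abc_def orient_bcd_def orient_cda_def orient_dab_def
      split: prod.splits)

lemma shape_bound: "shape_bound > 0" "shape_bound \<le> 1/2" "well_shaped shape_bound Q"
proof -
  have T: "dbl_area Q > 0"
    using orients_Q_pos by (simp add: dbl_area_def)
  then have "shape_bound * dbl_area Q = min (orient_abc Q) (orient_cda Q)"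
    by (simp add: shape_bound_def)
  then show "well_shaped shape_bound Q"
    using orients_Q_pos by (simp add: well_shaped_def)
  show "shape_bound > 0"
    using orients_Q_pos T by (simp add: shape_bound_def)
  show "shape_bound \<le> 1/2"
    using T by (simp add: shape_bound_def dbl_area_def divide_le_eq)
qed

lemma area_ratio: "0 \<le> area_ratio" "area_ratio < 1"
proof -
  have "2 * shape_bound \<le> 1" "1 \<le> real m ^ 2"
    using shape_bound(2) m_pos by (simp_all add: one_le_power)
  then have "2 * shape_bound \<le> real m ^ 2"
    by linarith
  then show "0 \<le> area_ratio"
    using m_pos by (simp add: area_ratio_def field_simps)
  show "area_ratio < 1"
    using shape_bound(1) m_pos by (simp add: area_ratio_def)
qed

lemma Wlev_Suc:
  assumes "n \<ge> 1"
  shows "Wlev Q pattern (Suc n) = (\<lambda>(W,k). Sm W m k) ` (Wlev Q pattern n \<times> K)"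
proof -
  obtain n' where n: "n = Suc n'"
    using assms by (cases n) auto
  have "Wlev Q pattern (Suc n) = (\<lambda>(W,k). PW Q W (Sm Q m k)) ` (Wlev Q pattern n \<times> K)"
    unfolding n by (auto simp only: Wlev.simps)
  also have "\<dots> = (\<lambda>(W,k). Sm W m k) ` (Wlev Q pattern n \<times> K)"
    using K_subset by (intro image_cong) (auto simp: PW_Q_Sm)
  finally show ?thesis .
qed

lemma finite_Wlev: "finite (Wlev Q pattern n)"
proof (induction n)
  case (Suc n)
  then show ?case
    by (cases "n = 0") (simp_all add: finite_K Wlev_Suc)
qed simp

lemma well_shaped_Wlev: "W \<in> Wlev Q pattern n \<Longrightarrow> well_shaped shape_bound W"
proof (induction n arbitrary: W)
  case (Suc n)
  have child: "well_shaped shape_bound (Sm V m k)" if "well_shaped shape_bound V" "k \<in> K" for V k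
    using well_shaped_Sm[OF m_pos _ that(1) shape_bound(2)] K_subset that(2) by blast
  show ?case
  proof (cases "n = 0")
    case True
    then have "W \<in> Sm Q m ` K"
      using Suc.prems by simp
    then show ?thesis
      using child shape_bound(3) by blast
  next
    case False
    then have "W \<in> (\<lambda>(V,k). Sm V m k) ` (Wlev Q pattern n \<times> K)"
      using Suc.prems Wlev_Suc[of n] by simp
    then obtain p where p: "p \<in> Wlev Q pattern n \<times> K" "W = (\<lambda>(V,k). Sm V m k) p"
      by (rule imageE)
    obtain V k where "p = (V,k)"
      by (rule prod.exhaust)
    with p Suc.IH child show ?thesis
      by simp
  qed
qed simp

text \<open>Each generation loses at least the cell k0 of every parent, i.e. the fraction
  2 shape_bound / m^2 of its area.\<close>
lemma sum_dbl_area_children_le: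
  assumes "finite A" "\<And>W. W \<in> A \<Longrightarrow> well_shaped shape_bound W"
  shows "(\<Sum>W'\<in>(\<lambda>(W,k). Sm W m k) ` (A \<times> K). dbl_area W') \<le> area_ratio * (\<Sum>W\<in>A. dbl_area W)"
proof -
  have child: "well_shaped shape_bound (Sm W m k) \<and> 2 * shape_bound * dbl_area W / real m ^ 2 \<le> dbl_area (Sm W m k)"
    if "W \<in> A" "k \<in> idxA m" for W k
    using well_shaped_Sm[OF m_pos that(2) assms(2)[OF that(1)] shape_bound(2)] .
  then have nonneg: "0 \<le> dbl_area (Sm W m k)" if "W \<in> A" "k \<in> idxA m" for W k
    using that well_shaped_dbl_area_nonneg by blast
  have parent: "(\<Sum>k\<in>K. dbl_area (Sm W m k)) \<le> area_ratio * dbl_area W" if "W \<in> A" for W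
  proof -
    have "(\<Sum>k\<in>K. dbl_area (Sm W m k)) \<le> (\<Sum>k\<in>idxA m - {k0}. dbl_area (Sm W m k))"
      using finite_idxA[OF m_pos] K_subset k0_missing nonneg[OF that] by (intro sum_mono2) auto
    also have "\<dots> = dbl_area W - dbl_area (Sm W m k0)"
      using finite_idxA[OF m_pos] k0_missing by (simp add: sum_diff1 sum_dbl_area_Sm[OF m_pos])
    also have "\<dots> \<le> area_ratio * dbl_area W"
      using child[OF that k0_missing(1)] by (simp add: area_ratio_def algebra_simps)
    finally show ?thesis .
  qed
  have "(\<Sum>W'\<in>(\<lambda>(W,k). Sm W m k) ` (A \<times> K). dbl_area W') \<le> (\<Sum>(W,k)\<in>A \<times> K. dbl_area (Sm W m k))"
    using assms(1) finite_K K_subset nonneg by (intro sum_image_le[THEN order_trans]) (auto simp: split_def o_def)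
  also have "\<dots> = (\<Sum>W\<in>A. \<Sum>k\<in>K. dbl_area (Sm W m k))"
    by (simp add: sum.cartesian_product)
  also have "\<dots> \<le> (\<Sum>W\<in>A. area_ratio * dbl_area W)"
    by (intro sum_mono parent)
  finally show ?thesis
    by (simp add: sum_distrib_left)
qed

lemma sum_dbl_area_Wlev_le:
  assumes "n \<ge> 1"
  shows "(\<Sum>W\<in>Wlev Q pattern n. dbl_area W) \<le> area_ratio ^ n * dbl_area Q"
  using assms
proof (induction n rule: nat_induct_at_least)
  case base
  have "pattern = (\<lambda>(W,k). Sm W m k) ` ({Q} \<times> K)"
    by auto
  then show ?case
    using sum_dbl_area_children_le[of "{Q}"] shape_bound(3) by simp
next
  case (Suc n)
  have "(\<Sum>W\<in>Wlev Q pattern (Suc n). dbl_area W) \<le> area_ratio * (\<Sum>W\<in>Wlev Q pattern n. dbl_area W)"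
    unfolding Wlev_Suc[OF Suc.hyps]
    by (intro sum_dbl_area_children_le finite_Wlev well_shaped_Wlev)
  also have "\<dots> \<le> area_ratio * (area_ratio ^ n * dbl_area Q)"
    using Suc.IH area_ratio(1) by (rule mult_left_mono)
  finally show ?case
    by simp
qed

lemma compact_Llev: "compact (Llev Q pattern n)"
  unfolding Llev_def by (intro compact_UN finite_Wlev compact_region)

lemma measure_Llev_le:
  assumes "n \<ge> 1"
  shows "measure lborel (Llev Q pattern n) \<le> area_ratio ^ n * dbl_area Q"
proof -
  have "measure lborel (Llev Q pattern n) \<le> (\<Sum>W\<in>Wlev Q pattern n. measure lborel (region W))"
    unfolding Llev_def by (intro measure_UNION_le finite_Wlev) (simp add: borel_compact compact_region)
  also have "\<dots> \<le> (\<Sum>W\<in>Wlev Q pattern n. dbl_area W)"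
    by (intro sum_mono measure_region_le[OF well_shaped_Wlev])
  also have "\<dots> \<le> area_ratio ^ n * dbl_area Q"
    using sum_dbl_area_Wlev_le[OF assms] .
  finally show ?thesis .
qed

lemma negligible_Linf: "negligible (Linf Q pattern)"
proof (rule negligible_if_covered_by_shrinking_compacts)
  show "Linf Q pattern \<subseteq> Llev Q pattern (Suc n)" for n
    unfolding Linf_def by (rule INT_lower) simp
  show "compact (Llev Q pattern (Suc n))" for n
    by (rule compact_Llev)
  have "norm (measure lborel (Llev Q pattern (Suc n))) \<le> area_ratio ^ Suc n * dbl_area Q" for n
    using measure_Llev_le[of "Suc n"] by simp
  then have "\<forall>n. norm (measure lborel (Llev Q pattern (Suc n))) \<le> area_ratio ^ Suc n * dbl_area Q"
    by blast
  moreover have "(\<lambda>n. area_ratio ^ Suc n * dbl_area Q) \<longlonglongrightarrow> 0"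
    using area_ratio by (intro tendsto_mult_left_zero LIMSEQ_power_zero[THEN LIMSEQ_Suc]) simp
  ultimately show "(\<lambda>n. measure lborel (Llev Q pattern (Suc n))) \<longlonglongrightarrow> 0"
    by (rule Lim_null_comparison[OF always_eventually])
qed

end

theorem theorem4p2:
  fixes Q :: quad and m :: nat and W1 :: "quad set"
  assumes "labelled_convex_quad Q"
    and "m \<ge> 4"
    and "labyrinth_set Q m W1"
  shows "interior (Linf Q W1) = {}"
proof -
  obtain k0 where k0: "k0 \<in> idxA m" "Sm Q m k0 \<notin> W1"
    using labyrinth_set_misses_cell[OF assms(1,3)] by blast
  define K where "K = {k \<in> idxA m. Sm Q m k \<in> W1}"
  have "W1 \<subseteq> Sm Q m ` idxA m"
    using assms(3) by (simp add: labyrinth_set_def Sset_def)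
  then have W1: "W1 = Sm Q m ` K"
    by (auto simp: K_def)
  interpret proper_cell_pattern Q m K k0
    using assms(1,2) k0 by unfold_locales (auto simp: K_def)
  have "negligible (Linf Q W1)"
    unfolding W1 by (rule negligible_Linf)
  then show ?thesis
    using open_not_negligible[OF open_interior] negligible_subset[OF _ interior_subset] by blast
qed

end
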